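(* Let $\varphi:[0,\infty)\to\mathbb{R}$ be a continuous function which is Lebesgue integrable on $(0,\infty)$, of bounded variation on $[0,\infty)$, and satisfies $\varphi(x)\to 0$ as $x\to\infty$, and let $\Phi(t)=\int_0^\infty e^{ixt}\,d\varphi(x)$. Then $\Phi(t)\to 0$ as $|t|\to\infty$ if and only if the two limits $$\lim_{t\to+\infty} t\int_0^\infty \varphi(x)\sin(xt)\,dx,\qquad \lim_{t\to+\infty} t\int_0^\infty \varphi(x)\cos(xt)\,dx$$ both exist; in that case they equal $\varphi(0)$ and $0$, respectively. *)

theory Defs
  imports "HOL-Analysis.Analysis"
begin

definition bounded_variation_on :: "(real \<Rightarrow> real) \<Rightarrow> real set \<Rightarrow> bool" where
  "bounded_variation_on f S \<longleftrightarrow>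
     (\<exists>M. \<forall>(n::nat) (x::nat \<Rightarrow> real).
        (\<forall>i\<le>n. x i \<in> S) \<and> (\<forall>i<n. x i \<le> x (Suc i)) \<longrightarrow>
        (\<Sum>i<n. \<bar>f (x (Suc i)) - f (x i)\<bar>) \<le> M)"

definition has_RS_integral ::
    "(real \<Rightarrow> complex) \<Rightarrow> (real \<Rightarrow> real) \<Rightarrow> real \<Rightarrow> real \<Rightarrow> complex \<Rightarrow> bool" where
  "has_RS_integral f g a b I \<longleftrightarrow>
     (\<forall>e>0. \<exists>d>0. \<forall>(n::nat) (x::nat \<Rightarrow> real) (t::nat \<Rightarrow> real).
        x 0 = a \<and> x n = b \<and>
        (\<forall>i<n. x i < x (Suc i) \<and> x (Suc i) - x i < d \<and> x i \<le> t i \<and> t i \<le> x (Suc i))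
        \<longrightarrow> norm ((\<Sum>i<n. f (t i) * complex_of_real (g (x (Suc i)) - g (x i))) - I) < e)"

definition RS_integral :: "(real \<Rightarrow> complex) \<Rightarrow> (real \<Rightarrow> real) \<Rightarrow> real \<Rightarrow> real \<Rightarrow> complex" where
  "RS_integral f g a b = (THE I. has_RS_integral f g a b I)"

definition RS_integral_0_inf :: "(real \<Rightarrow> complex) \<Rightarrow> (real \<Rightarrow> real) \<Rightarrow> complex" where
  "RS_integral_0_inf f g = Lim at_top (\<lambda>R. RS_integral f g 0 R)"

definition Phi :: "(real \<Rightarrow> real) \<Rightarrow> real \<Rightarrow> complex" where
  "Phi \<phi> t = RS_integral_0_inf (\<lambda>x. cis (x * t)) \<phi>"

end

theory Submission
  imports Defs "HOL-Probability.Sinc_Integral"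
begin

text \<open>Integration by parts against the smooth kernel e^(ixt) gives
  Phi(t) = -phi(0) - i t F(t) with F(t) the Fourier integral of phi over [0,oo), so that
  Re Phi(t) = t * (integral of phi sin) - phi(0) and Im Phi(t) = -t * (integral of phi cos);
  together with Phi(-t) = conj Phi(t) this gives everything except that the two limits, when
  they exist, must be phi(0) and 0, i.e. that any limit of Phi at +oo is 0. For that,
  average Phi(n s) against e^(-s) ds: as n grows this tends to the limit of Phi, while
  Fubini turns it into -phi(0) - i * integral of phi(u/n) (1 - iu)^(-2) du over [0,oo),
  which tends to -phi(0) - i * phi(0) * i = 0.\<close>

lemma partition_point_bounds:
  fixes x :: "nat \<Rightarrow> real"
  assumes "x 0 = a" "x n = b" "\<And>i. i < n \<Longrightarrow> x i \<le> x (Suc i)" "i \<le> n"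
  shows "x i \<in> {a..b}"
proof -
  have "{0..<i} \<subseteq> {..<n}" "{i..<n} \<subseteq> {..<n}" using \<open>i \<le> n\<close> by auto
  then show ?thesis
    using lift_Suc_mono_le_ivl[of "{..<n}" x 0 i] lift_Suc_mono_le_ivl[of "{..<n}" x i n] assms
    by auto
qed

lemma has_RS_integral_unique:
  assumes "a < b" "has_RS_integral f g a b I" "has_RS_integral f g a b J"
  shows "I = J"
proof (rule ccontr)
  assume "I \<noteq> J"
  define e where "e = norm (I - J) / 2"
  have "e > 0" using \<open>I \<noteq> J\<close> by (simp add: e_def)
  obtain d1 where "d1 > 0" and close_I: "\<forall>n x t. x 0 = a \<and> x n = b \<and>
        (\<forall>i<n. x i < x (Suc i) \<and> x (Suc i) - x i < d1 \<and> x i \<le> t i \<and> t i \<le> x (Suc i))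
        \<longrightarrow> norm ((\<Sum>i<n. f (t i) * of_real (g (x (Suc i)) - g (x i))) - I) < e"
    using assms(2) \<open>e > 0\<close> unfolding has_RS_integral_def by blast
  obtain d2 where "d2 > 0" and close_J: "\<forall>n x t. x 0 = a \<and> x n = b \<and>
        (\<forall>i<n. x i < x (Suc i) \<and> x (Suc i) - x i < d2 \<and> x i \<le> t i \<and> t i \<le> x (Suc i))
        \<longrightarrow> norm ((\<Sum>i<n. f (t i) * of_real (g (x (Suc i)) - g (x i))) - J) < e"
    using assms(3) \<open>e > 0\<close> unfolding has_RS_integral_def by blast
  define d where "d = min d1 d2"
  obtain n :: nat where n: "(b - a) / d < n"
    using reals_Archimedean2 by blast
  have "d > 0" using \<open>d1 > 0\<close> \<open>d2 > 0\<close> by (simp add: d_def)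
  then have "n > 0"
    using n \<open>a < b\<close> by (cases n) (auto simp: field_simps)
  then have "(b - a) / n < d"
    using n \<open>d > 0\<close> by (simp add: field_simps)
  define x where "x i = a + real i * ((b - a) / n)" for i
  have step: "x (Suc i) - x i = (b - a) / n" for i
    using \<open>n > 0\<close> by (simp add: x_def field_simps)
  have partition: "x 0 = a \<and> x n = b \<and>
        (\<forall>i<n. x i < x (Suc i) \<and> x (Suc i) - x i < d \<and> x i \<le> x i \<and> x i \<le> x (Suc i))"
  proof -
    have "(b - a) / n > 0" using \<open>a < b\<close> \<open>n > 0\<close> by simp
    then have "x i < x (Suc i)" for i using step[of i] by linarith
    then show ?thesis using step \<open>n > 0\<close> \<open>(b - a) / n < d\<close> by (auto simp: x_def less_imp_le)
  qed
  let ?S = "\<Sum>i<n. f (x i) * of_real (g (x (Suc i)) - g (x i))"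
  have "norm (?S - I) < e" "norm (?S - J) < e"
    using close_I[rule_format, where n=n and x=x and t=x]
      close_J[rule_format, where n=n and x=x and t=x] partition
    by (auto simp: d_def)
  then have "norm (I - J) < 2 * e"
    using norm_triangle_ineq[of "I - ?S" "?S - J"] norm_minus_commute[of I ?S] by simp
  then show False by (simp add: e_def)
qed

lemma RS_integral_eqI: "a < b \<Longrightarrow> has_RS_integral f g a b I \<Longrightarrow> RS_integral f g a b = I"
  unfolding RS_integral_def using has_RS_integral_unique by blast

lemma has_RS_integral_cong:
  assumes eq: "\<And>x. x \<in> {a..b} \<Longrightarrow> g1 x = g2 x" and "has_RS_integral f g1 a b I"
  shows "has_RS_integral f g2 a b I"
  unfolding has_RS_integral_def
proof (intro allI impI)
  fix e :: real assume "e > 0"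
  then obtain d where "d > 0" and close: "\<forall>n x t. x 0 = a \<and> x n = b \<and>
        (\<forall>i<n. x i < x (Suc i) \<and> x (Suc i) - x i < d \<and> x i \<le> t i \<and> t i \<le> x (Suc i))
        \<longrightarrow> norm ((\<Sum>i<n. f (t i) * of_real (g1 (x (Suc i)) - g1 (x i))) - I) < e"
    using assms(2) unfolding has_RS_integral_def by blast
  show "\<exists>d>0. \<forall>n x t. x 0 = a \<and> x n = b \<and>
        (\<forall>i<n. x i < x (Suc i) \<and> x (Suc i) - x i < d \<and> x i \<le> t i \<and> t i \<le> x (Suc i))
        \<longrightarrow> norm ((\<Sum>i<n. f (t i) * of_real (g2 (x (Suc i)) - g2 (x i))) - I) < e"
  proof (intro exI[of _ d] conjI allI impI \<open>d > 0\<close>)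
    fix n x and t :: "nat \<Rightarrow> real"
    assume partition: "x 0 = a \<and> x n = b \<and>
        (\<forall>i<n. x i < x (Suc i) \<and> x (Suc i) - x i < d \<and> x i \<le> t i \<and> t i \<le> x (Suc i))"
    have "x i \<in> {a..b}" if "i \<le> n" for i
    proof (rule partition_point_bounds[of x a n b i])
      show "x j \<le> x (Suc j)" if "j < n" for j
        using partition that by fastforce
    qed (use partition that in auto)
    then have "(\<Sum>i<n. f (t i) * of_real (g2 (x (Suc i)) - g2 (x i)))
             = (\<Sum>i<n. f (t i) * of_real (g1 (x (Suc i)) - g1 (x i)))"
      by (intro sum.cong refl) (simp add: eq)
    moreover have "norm ((\<Sum>i<n. f (t i) * of_real (g1 (x (Suc i)) - g1 (x i))) - I) < e"
      using close partition by blast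
    ultimately show "norm ((\<Sum>i<n. f (t i) * of_real (g2 (x (Suc i)) - g2 (x i))) - I) < e"
      by simp
  qed
qed

lemma Phi_cong:
  assumes "\<And>x. x \<ge> 0 \<Longrightarrow> \<phi> x = \<psi> x"
  shows "Phi \<phi> = Phi \<psi>"
proof -
  have "has_RS_integral f \<phi> 0 R = has_RS_integral f \<psi> 0 R" for f R
    using has_RS_integral_cong[of 0 R \<phi> \<psi>] has_RS_integral_cong[of 0 R \<psi> \<phi>] assms
    by (auto simp: fun_eq_iff)
  then show ?thesis
    unfolding Phi_def RS_integral_0_inf_def RS_integral_def by simp
qed

lemma cis_mult_has_vector_derivative:
  "((\<lambda>x. cis (x * t)) has_vector_derivative (\<i> * of_real t * cis (s * t))) (at s within S)"
proof -
  have "cis (x * t) = exp (x *\<^sub>R (\<i> * of_real t))" for x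
    by (simp add: cis_conv_exp scaleR_conv_of_real mult_ac)
  then show ?thesis
    using has_vector_derivative_at_within[OF exp_scaleR_has_vector_derivative_left] by simp
qed

lemma cis_Stieltjes_step_estimate:
  fixes p :: "real \<Rightarrow> real"
  assumes p: "continuous_on {a..b} p" and \<tau>: "a \<le> \<tau>" "\<tau> \<le> b"
    and osc: "\<And>s. s \<in> {a..b} \<Longrightarrow> \<bar>p s - p a\<bar> \<le> \<eta>"
  shows "norm (cis (\<tau> * t) * of_real (p b - p a)
           - (cis (b * t) * of_real (p b) - cis (a * t) * of_real (p a)
              - integral {a..b} (\<lambda>s. \<i> * of_real t * cis (s * t) * of_real (p s))))
         \<le> 2 * \<bar>t\<bar> * \<eta> * (b - a)"
proof -
  define f where "f x = cis (x * t)" for x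
  define g where "g = (\<lambda>s. \<i> * of_real t * f s * of_real (p s))"
  have "a \<le> b" "0 \<le> \<eta>" using \<tau> osc[of a] by auto
  have FTC: "((\<lambda>s. \<i> * of_real t * f s) has_integral (f v - f u)) {u..v}" if "u \<le> v" for u v
    unfolding f_def
    by (rule fundamental_theorem_of_calculus[OF that]) (rule cis_mult_has_vector_derivative)
  have f_lipschitz: "norm (f v - f u) \<le> \<bar>t\<bar> * (v - u)" if "u \<le> v" for u v
    using has_integral_bound_real[OF _ finite.emptyI FTC[OF that], of "\<bar>t\<bar>"] that
    by (simp add: norm_mult f_def)
  have "g integrable_on {a..b}"
    unfolding g_def f_def by (intro integrable_continuous_interval continuous_intros p)
  then have "((\<lambda>s. g s - \<i> * of_real t * f s * of_real (p a)) has_integral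
              (integral {a..b} g - (f b - f a) * of_real (p a))) {a..b}"
    by (intro has_integral_diff integrable_integral has_integral_mult_left FTC \<open>a \<le> b\<close>)
  moreover have "g s - \<i> * of_real t * f s * of_real (p a) = \<i> * of_real t * f s * of_real (p s - p a)"
    for s by (simp add: g_def algebra_simps)
  ultimately have deviation: "((\<lambda>s. \<i> * of_real t * f s * of_real (p s - p a)) has_integral
              (integral {a..b} g - (f b - f a) * of_real (p a))) {a..b}"
    by simp
  have "norm (integral {a..b} g - (f b - f a) * of_real (p a))
      \<le> (\<bar>t\<bar> * \<eta>) * Henstock_Kurzweil_Integration.content {a..b}"
  proof (rule has_integral_bound_real[OF _ finite.emptyI deviation])
    fix s assume "s \<in> {a..b} - {}"
    then show "norm (\<i> * of_real t * f s * of_real (p s - p a)) \<le> \<bar>t\<bar> * \<eta>"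
      using osc[of s] by (simp add: norm_mult f_def mult_left_mono del: of_real_diff)
  qed (use \<open>0 \<le> \<eta>\<close> in simp)
  then have bound1: "norm (integral {a..b} g - (f b - f a) * of_real (p a)) \<le> \<bar>t\<bar> * \<eta> * (b - a)"
    using \<open>a \<le> b\<close> by simp
  have "norm ((f \<tau> - f b) * of_real (p b - p a)) = norm (f b - f \<tau>) * \<bar>p b - p a\<bar>"
    by (simp add: norm_mult norm_minus_commute del: of_real_diff)
  also have "\<dots> \<le> (\<bar>t\<bar> * (b - a)) * \<eta>"
  proof (rule mult_mono)
    show "norm (f b - f \<tau>) \<le> \<bar>t\<bar> * (b - a)"
      using f_lipschitz[of \<tau> b] \<tau> by (simp add: order_trans[OF _ mult_left_mono])
  qed (use osc \<open>a \<le> b\<close> in auto)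
  finally have bound2: "norm ((f \<tau> - f b) * of_real (p b - p a)) \<le> \<bar>t\<bar> * \<eta> * (b - a)"
    by (simp only: mult_ac)
  have decomposition:
    "f \<tau> * of_real (p b - p a) - (f b * of_real (p b) - f a * of_real (p a) - integral {a..b} g)
      = (f \<tau> - f b) * of_real (p b - p a) + (integral {a..b} g - (f b - f a) * of_real (p a))"
    by (simp add: algebra_simps)
  have "norm (f \<tau> * of_real (p b - p a) - (f b * of_real (p b) - f a * of_real (p a) - integral {a..b} g))
      \<le> norm ((f \<tau> - f b) * of_real (p b - p a)) + norm (integral {a..b} g - (f b - f a) * of_real (p a))"
    unfolding decomposition by (rule norm_triangle_ineq)
  also have "\<dots> \<le> 2 * \<bar>t\<bar> * \<eta> * (b - a)"
    using bound1 bound2 by simp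
  finally show ?thesis
    by (simp only: f_def g_def)
qed

lemma cis_RS_sum_by_parts_estimate:
  fixes p :: "real \<Rightarrow> real" and x \<tau> :: "nat \<Rightarrow> real"
  assumes p: "continuous_on {a..b} p"
    and partition: "x 0 = a" "x n = b" "\<And>i. i < n \<Longrightarrow> x i \<le> \<tau> i \<and> \<tau> i \<le> x (Suc i)"
    and osc: "\<And>i s. i < n \<Longrightarrow> s \<in> {x i..x (Suc i)} \<Longrightarrow> \<bar>p s - p (x i)\<bar> \<le> \<eta>"
  shows "norm ((\<Sum>i<n. cis (\<tau> i * t) * of_real (p (x (Suc i)) - p (x i))) -
            (cis (b * t) * of_real (p b) - cis (a * t) * of_real (p a)
             - integral {a..b} (\<lambda>s. \<i> * of_real t * cis (s * t) * of_real (p s))))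
         \<le> 2 * \<bar>t\<bar> * \<eta> * (b - a)"
proof -
  define g where "g = (\<lambda>s. \<i> * of_real t * cis (s * t) * of_real (p s))"
  define h where "h y = cis (y * t) * of_real (p y) - integral {a..y} g" for y
  have points: "x i \<in> {a..b}" if "i \<le> n" for i
    using partition_point_bounds[of x a n b i] partition that by force
  have g_int: "g integrable_on {a..v}" if "v \<le> b" for v
    unfolding g_def using that
    by (intro integrable_continuous_interval continuous_intros continuous_on_subset[OF p]) auto
  have h_step: "h (x (Suc i)) - h (x i) = cis (x (Suc i) * t) * of_real (p (x (Suc i)))
      - cis (x i * t) * of_real (p (x i)) - integral {x i..x (Suc i)} g" if "i < n" for i
    using points[of i] points[of "Suc i"] partition(3)[OF that] g_int[of "x (Suc i)"]
      Henstock_Kurzweil_Integration.integral_combine[of a "x i" "x (Suc i)" g] that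
    by (simp add: h_def algebra_simps)
  have "cis (b * t) * of_real (p b) - cis (a * t) * of_real (p a) - integral {a..b} g
      = (\<Sum>i<n. h (x (Suc i)) - h (x i))"
    using sum_lessThan_telescope[of "\<lambda>i. h (x i)" n] partition by (simp add: h_def)
  then have "norm ((\<Sum>i<n. cis (\<tau> i * t) * of_real (p (x (Suc i)) - p (x i))) -
          (cis (b * t) * of_real (p b) - cis (a * t) * of_real (p a) - integral {a..b} g))
      = norm (\<Sum>i<n. cis (\<tau> i * t) * of_real (p (x (Suc i)) - p (x i)) - (h (x (Suc i)) - h (x i)))"
    by (simp add: sum_subtractf)
  also have "\<dots> \<le> (\<Sum>i<n. norm (cis (\<tau> i * t) * of_real (p (x (Suc i)) - p (x i))
                                  - (h (x (Suc i)) - h (x i))))"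
    by (rule norm_sum)
  also have "\<dots> \<le> (\<Sum>i<n. 2 * \<bar>t\<bar> * \<eta> * (x (Suc i) - x i))"
  proof (rule sum_mono)
    fix i assume "i \<in> {..<n}"
    then have "i < n" by simp
    show "norm (cis (\<tau> i * t) * of_real (p (x (Suc i)) - p (x i)) - (h (x (Suc i)) - h (x i)))
        \<le> 2 * \<bar>t\<bar> * \<eta> * (x (Suc i) - x i)"
      unfolding h_step[OF \<open>i < n\<close>] g_def
      by (rule cis_Stieltjes_step_estimate[OF continuous_on_subset[OF p]])
        (use points[of i] points[of "Suc i"] partition(3)[OF \<open>i < n\<close>] osc[OF \<open>i < n\<close>]
          \<open>i < n\<close> in auto)
  qed
  also have "\<dots> = 2 * \<bar>t\<bar> * \<eta> * (b - a)"
    using partition by (simp add: sum_distrib_left[symmetric] sum_lessThan_telescope)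
  finally show ?thesis
    unfolding g_def .
qed

lemma has_RS_integral_cis_by_parts:
  fixes p :: "real \<Rightarrow> real"
  assumes p: "continuous_on {a..b} p" and "a < b"
  shows "has_RS_integral (\<lambda>x. cis (x * t)) p a b
     (cis (b * t) * of_real (p b) - cis (a * t) * of_real (p a)
       - integral {a..b} (\<lambda>s. \<i> * of_real t * cis (s * t) * of_real (p s)))"
  unfolding has_RS_integral_def
proof (intro allI impI)
  fix e :: real assume "e > 0"
  define \<eta> where "\<eta> = e / (2 * (\<bar>t\<bar> + 1) * (b - a + 1))"
  have "\<eta> > 0" using \<open>e > 0\<close> \<open>a < b\<close> by (simp add: \<eta>_def)
  obtain d where "d > 0"
    and d: "\<And>u v. u \<in> {a..b} \<Longrightarrow> v \<in> {a..b} \<Longrightarrow> dist v u < d \<Longrightarrow> dist (p v) (p u) < \<eta>"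
    using compact_uniformly_continuous[OF p compact_Icc] \<open>\<eta> > 0\<close>
    unfolding uniformly_continuous_on_def by metis
  have margin: "2 * \<bar>t\<bar> * \<eta> * (b - a) < e"
  proof -
    have "\<bar>t\<bar> * (b - a) < (\<bar>t\<bar> + 1) * (b - a + 1)"
      using \<open>a < b\<close> by (simp add: algebra_simps)
    moreover have "2 * \<bar>t\<bar> * \<eta> * (b - a) = e * (\<bar>t\<bar> * (b - a)) / ((\<bar>t\<bar> + 1) * (b - a + 1))"
      unfolding \<eta>_def using \<open>a < b\<close> by (simp add: divide_simps add_pos_nonneg)
    ultimately show ?thesis
      using \<open>e > 0\<close> \<open>a < b\<close> by (simp add: divide_less_eq add_pos_nonneg)
  qed
  show "\<exists>d>0. \<forall>n x \<tau>. x 0 = a \<and> x n = b \<and>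
         (\<forall>i<n. x i < x (Suc i) \<and> x (Suc i) - x i < d \<and> x i \<le> \<tau> i \<and> \<tau> i \<le> x (Suc i)) \<longrightarrow>
         norm ((\<Sum>i<n. cis (\<tau> i * t) * of_real (p (x (Suc i)) - p (x i))) -
            (cis (b * t) * of_real (p b) - cis (a * t) * of_real (p a)
             - integral {a..b} (\<lambda>s. \<i> * of_real t * cis (s * t) * of_real (p s)))) < e"
  proof (intro exI[of _ d] conjI allI impI \<open>d > 0\<close>)
    fix n x \<tau> assume H: "x 0 = a \<and> x n = b \<and>
       (\<forall>i<n. x i < x (Suc i) \<and> x (Suc i) - x i < d \<and> x i \<le> \<tau> i \<and> \<tau> i \<le> x (Suc i))"
    have points: "x i \<in> {a..b}" if "i \<le> n" for i
      using partition_point_bounds[of x a n b i] H that by force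
    have osc: "\<bar>p s - p (x i)\<bar> \<le> \<eta>" if "i < n" "s \<in> {x i..x (Suc i)}" for i s
      using d[of "x i" s] points[of i] points[of "Suc i"] H that by (force simp: dist_real_def)
    have "norm ((\<Sum>i<n. cis (\<tau> i * t) * of_real (p (x (Suc i)) - p (x i))) -
            (cis (b * t) * of_real (p b) - cis (a * t) * of_real (p a)
             - integral {a..b} (\<lambda>s. \<i> * of_real t * cis (s * t) * of_real (p s))))
        \<le> 2 * \<bar>t\<bar> * \<eta> * (b - a)"
      by (rule cis_RS_sum_by_parts_estimate[OF p]) (use H osc in auto)
    with margin show "norm ((\<Sum>i<n. cis (\<tau> i * t) * of_real (p (x (Suc i)) - p (x i))) -
            (cis (b * t) * of_real (p b) - cis (a * t) * of_real (p a)
             - integral {a..b} (\<lambda>s. \<i> * of_real t * cis (s * t) * of_real (p s)))) < e"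
      by linarith
  qed
qed

definition half_line_Fourier :: "(real \<Rightarrow> real) \<Rightarrow> real \<Rightarrow> complex" where
  "half_line_Fourier q t = (LBINT x:{0..}. cis (x * t) * of_real (q x))"

lemma Phi_by_parts:
  fixes q :: "real \<Rightarrow> real"
  assumes q: "continuous_on UNIV q" and int: "set_integrable lborel {0..} q"
    and lim: "(q \<longlongrightarrow> 0) at_top"
  shows "Phi q t = - of_real (q 0) - \<i> * of_real t * half_line_Fourier q t"
proof -
  define g where "g = (\<lambda>s. \<i> * of_real t * cis (s * t) * of_real (q s))"
  have g_cont: "continuous_on UNIV g"
    unfolding g_def by (intro continuous_intros q)
  then have [measurable]: "g \<in> borel_measurable borel"
    by (rule borel_measurable_continuous_onI)
  have g_int: "set_integrable lborel {0..} g"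
  proof (rule set_integrable_bound[where f = "\<lambda>x. \<bar>t\<bar> * q x"])
    show "set_integrable lborel {0..} (\<lambda>x. \<bar>t\<bar> * q x)" using int by simp
    show "set_borel_measurable lborel {0..} g"
      unfolding set_borel_measurable_def by measurable
  qed (auto simp: g_def norm_mult abs_mult)
  have "((\<lambda>R. cis (R * t) * of_real (q R)) \<longlongrightarrow> 0) at_top"
    by (rule tendsto_norm_zero_cancel) (use tendsto_rabs[OF lim] in \<open>simp add: norm_mult\<close>)
  moreover have "((\<lambda>R. LBINT s:{0..R}. g s) \<longlongrightarrow> (LBINT s:{0..}. g s)) at_top"
    by (rule tendsto_set_lebesgue_integral_at_top[OF _ g_int]) auto
  ultimately have lim_by_parts:
    "((\<lambda>R. cis (R * t) * of_real (q R) - of_real (q 0) - (LBINT s:{0..R}. g s))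
      \<longlongrightarrow> 0 - of_real (q 0) - (LBINT s:{0..}. g s)) at_top"
    by (intro tendsto_diff tendsto_const)
  have by_parts: "\<forall>\<^sub>F R in at_top. cis (R * t) * of_real (q R) - of_real (q 0) - (LBINT s:{0..R}. g s)
      = RS_integral (\<lambda>x. cis (x * t)) q 0 R"
    using eventually_gt_at_top[of 0]
  proof eventually_elim
    case (elim R)
    have "RS_integral (\<lambda>x. cis (x * t)) q 0 R
        = cis (R * t) * of_real (q R) - of_real (q 0) - integral {0..R} g"
      unfolding g_def
      by (rule RS_integral_eqI[OF elim has_RS_integral_cis_by_parts[OF continuous_on_subset[OF q] elim, simplified]])
    also have "integral {0..R} g = (LBINT s:{0..R}. g s)"
      using set_borel_integral_eq_integral(2)[OF borel_integrable_atLeastAtMost'[OF continuous_on_subset[OF g_cont]]]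
      by simp
    finally show ?case
      by (rule sym)
  qed
  have "((\<lambda>R. RS_integral (\<lambda>x. cis (x * t)) q 0 R)
      \<longlongrightarrow> 0 - of_real (q 0) - (LBINT s:{0..}. g s)) at_top"
    using Lim_transform_eventually[OF lim_by_parts by_parts] by simp
  then show ?thesis
    unfolding Phi_def RS_integral_0_inf_def half_line_Fourier_def
    by (simp add: tendsto_Lim g_def set_integral_mult_right mult.assoc)
qed

lemma
  fixes f :: "real \<Rightarrow> 'a::{banach, second_countable_topology}"
  assumes [measurable]: "f \<in> borel_measurable borel"
  shows set_integrable_atLeast_iff_greaterThan:
      "set_integrable lborel {a..} f \<longleftrightarrow> set_integrable lborel {a<..} f"
    and set_integral_atLeast_eq_greaterThan: "(LBINT x:{a..}. f x) = (LBINT x:{a<..}. f x)"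
proof -
  have ae: "AE x in lborel. indicator {a..} x *\<^sub>R f x = indicator {a<..} x *\<^sub>R f x"
    using AE_lborel_singleton[of a] by eventually_elim (auto split: split_indicator)
  show "set_integrable lborel {a..} f \<longleftrightarrow> set_integrable lborel {a<..} f"
    unfolding set_integrable_def by (rule integrable_cong_AE[OF _ _ ae]) auto
  show "(LBINT x:{a..}. f x) = (LBINT x:{a<..}. f x)"
    unfolding set_lebesgue_integral_def by (rule integral_cong_AE[OF _ _ ae]) auto
qed

lemma set_integrable_exp_neg: "set_integrable lborel {0..} (\<lambda>s::real. exp (- s))"
  and set_integral_exp_neg: "(LBINT s:{0..}. exp (- s)) = (1::real)"
  and set_integrable_mult_exp_neg: "set_integrable lborel {0..} (\<lambda>s::real. s * exp (- s))"
proof -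
  have "has_bochner_integral lborel (\<lambda>x::real. indicator {0..} x * (x ^ k * exp (- x))) (fact k)"
    for k :: nat
    using has_bochner_integral_I0i_power_exp_m'[of k] by (simp add: mult_ac)
  from this[of 0] this[of 1]
  have "integrable lborel (\<lambda>x::real. indicator {0..} x * exp (- x))"
    "integral\<^sup>L lborel (\<lambda>x::real. indicator {0..} x * exp (- x)) = 1"
    "integrable lborel (\<lambda>x::real. indicator {0..} x * (x * exp (- x)))"
    by (auto intro: integrable.intros dest: has_bochner_integral_integral_eq)
  then show "set_integrable lborel {0..} (\<lambda>s::real. exp (- s))"
    "(LBINT s:{0..}. exp (- s)) = (1::real)"
    "set_integrable lborel {0..} (\<lambda>s::real. s * exp (- s))"
    unfolding set_integrable_def set_lebesgue_integral_def by simp_all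
qed

lemma set_integral_atLeast_FTC:
  fixes f F :: "real \<Rightarrow> 'a::euclidean_space"
  assumes int: "set_integrable lborel {a..} f"
    and der: "\<And>x. x \<ge> a \<Longrightarrow> (F has_vector_derivative f x) (at x)"
    and lim: "(F \<longlongrightarrow> B) at_top"
  shows "(LBINT x:{a..}. f x) = B - F a"
proof -
  have ev: "\<forall>\<^sub>F b in at_top. (LBINT x:{a..b}. f x) = F b - F a"
    using eventually_ge_at_top[of a]
  proof eventually_elim
    case (elim b)
    have "(f has_integral (F b - F a)) {a..b}"
      by (rule fundamental_theorem_of_calculus[OF elim])
         (auto intro!: has_vector_derivative_at_within der)
    moreover have "set_integrable lborel {a..b} f"
      by (rule set_integrable_subset[OF int]) auto
    ultimately show ?case
      using set_borel_integral_eq_integral(2) integral_unique by metis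
  qed
  have "((\<lambda>b. LBINT x:{a..b}. f x) \<longlongrightarrow> B - F a) at_top"
    by (rule Lim_transform_eventually[OF tendsto_diff[OF lim tendsto_const]])
       (use ev in \<open>simp add: eventually_mono eq_commute\<close>)
  moreover have "((\<lambda>b. LBINT x:{a..b}. f x) \<longlongrightarrow> (LBINT x:{a..}. f x)) at_top"
    by (rule tendsto_set_lebesgue_integral_at_top[OF _ int]) auto
  ultimately show ?thesis
    using tendsto_unique by force
qed

definition abel_kernel :: "real \<Rightarrow> complex" where
  "abel_kernel u = 1 / (1 - \<i> * of_real u)\<^sup>2"

lemma abel_kernel_measurable [measurable]: "abel_kernel \<in> borel_measurable borel"
  unfolding abel_kernel_def by measurable

lemma norm_abel_kernel: "norm (abel_kernel u) = 1 / (1 + u\<^sup>2)"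
proof -
  have "norm (1 - \<i> * of_real u) = sqrt (1 + u\<^sup>2)"
    by (simp add: cmod_def)
  then show ?thesis
    by (simp add: abel_kernel_def norm_divide norm_power)
qed

lemma abel_kernel_eq_integral:
  "abel_kernel u = (LBINT s:{0..}. of_real (s * exp (- s)) * cis (u * s))"
proof -
  define c where "c = \<i> * of_real u - 1"
  have "c \<noteq> 0" by (simp add: c_def complex_eq_iff)
  have "norm c \<ge> 1"
    unfolding c_def using abs_Re_le_cmod[of "\<i> * of_real u - 1"] by simp
  have integrand: "of_real (s * exp (- s)) * cis (u * s) = of_real s * exp (of_real s * c)" for s
    by (simp add: c_def cis_conv_exp exp_of_real[symmetric] exp_add[symmetric] algebra_simps)
  define F where "F z = exp (z * c) * (z / c - 1 / c\<^sup>2)" for z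
  have "((\<lambda>s. F (of_real s)) has_vector_derivative (of_real s * exp (of_real s * c))) (at s)" for s :: real
  proof (rule has_vector_derivative_real_field)
    show "(F has_field_derivative of_real s * exp (of_real s * c)) (at (of_real s))"
      unfolding F_def using \<open>c \<noteq> 0\<close>
      by (auto intro!: derivative_eq_intros simp: field_simps power2_eq_square)
  qed
  moreover have "set_integrable lborel {0..} (\<lambda>s. complex_of_real s * exp (of_real s * c))"
  proof (rule set_integrable_bound[OF set_integrable_mult_exp_neg])
    show "set_borel_measurable lborel {0..} (\<lambda>s. complex_of_real s * exp (complex_of_real s * c))"
      unfolding set_borel_measurable_def by measurable
  qed (auto simp: norm_mult c_def integrand[symmetric])
  moreover have "((\<lambda>s. F (of_real s)) \<longlongrightarrow> 0) at_top"
  proof (rule Lim_null_comparison)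
    show "\<forall>\<^sub>F s in at_top. norm (F (of_real s)) \<le> exp (- s) * (s + 1)"
      using eventually_ge_at_top[of 1]
    proof eventually_elim
      case (elim s)
      have "norm (of_real s / c - 1 / c\<^sup>2) \<le> norm (of_real s / c) + norm (1 / c\<^sup>2)"
        by (rule norm_triangle_ineq4)
      also have "\<dots> \<le> s + 1"
        using \<open>norm c \<ge> 1\<close> elim
        by (intro add_mono) (simp_all add: norm_divide norm_power divide_le_eq
            mult_le_cancel_left1 one_le_power)
      finally have "norm (of_real s / c - 1 / c\<^sup>2) \<le> s + 1" .
      moreover have "norm (exp (of_real s * c)) = exp (- s)"
        by (simp add: norm_exp_eq_Re c_def)
      ultimately show ?case
        unfolding F_def norm_mult by (simp add: mult_left_mono)
    qed
    show "((\<lambda>s::real. exp (- s) * (s + 1)) \<longlongrightarrow> 0) at_top"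
      by real_asymp
  qed
  ultimately have "(LBINT s:{0..}. of_real s * exp (of_real s * c)) = 0 - F 0"
    using set_integral_atLeast_FTC by fastforce
  also have "\<dots> = abel_kernel u"
    by (simp add: F_def abel_kernel_def c_def power2_eq_square algebra_simps)
  finally show ?thesis
    unfolding integrand by simp
qed

lemma set_integrable_abel_kernel: "set_integrable lborel {0..} abel_kernel"
proof (rule set_integrable_bound[where f = "\<lambda>u. 1 / (1 + u\<^sup>2)"])
  have "set_integrable lborel {0<..} (\<lambda>u::real. 1 / (1 + u\<^sup>2))"
    using integrable_I0i_1_div_plus_square
    unfolding interval_lebesgue_integrable_def by (simp add: zero_ereal_def)
  then show "set_integrable lborel {0..} (\<lambda>u::real. 1 / (1 + u\<^sup>2))"
    by (subst set_integrable_atLeast_iff_greaterThan) auto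
  show "set_borel_measurable lborel {0..} abel_kernel"
    unfolding set_borel_measurable_def by measurable
qed (simp add: norm_abel_kernel)

lemma set_integral_abel_kernel: "(LBINT u:{0..}. abel_kernel u) = \<i>"
proof -
  define G where "G z = - \<i> / (1 - \<i> * z)" for z
  have "((\<lambda>u. G (of_real u)) has_vector_derivative abel_kernel u) (at u)" for u :: real
  proof (rule has_vector_derivative_real_field)
    have "1 - \<i> * complex_of_real u \<noteq> 0" by (simp add: complex_eq_iff)
    then show "(G has_field_derivative abel_kernel u) (at (of_real u))"
      unfolding G_def abel_kernel_def
      by (auto intro!: derivative_eq_intros simp: field_simps power2_eq_square)
  qed
  moreover have "((\<lambda>u. G (of_real u)) \<longlongrightarrow> 0) at_top"
  proof (rule Lim_null_comparison)
    show "\<forall>\<^sub>F u in at_top. norm (G (of_real u)) \<le> 1 / u"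
      using eventually_gt_at_top[of 0]
    proof eventually_elim
      case (elim u)
      have "u \<le> norm (1 - \<i> * complex_of_real u)"
        using abs_Im_le_cmod[of "1 - \<i> * complex_of_real u"] by simp
      then show ?case using elim by (simp add: G_def norm_divide divide_le_eq field_simps)
    qed
    show "((\<lambda>u::real. 1 / u) \<longlongrightarrow> 0) at_top" by real_asymp
  qed
  ultimately have "(LBINT u:{0..}. abel_kernel u) = 0 - G 0"
    using set_integral_atLeast_FTC[OF set_integrable_abel_kernel] by fastforce
  then show ?thesis by (simp add: G_def)
qed

lemma borel_measurable_cis [measurable]: "cis \<in> borel_measurable borel"
  by (intro borel_measurable_continuous_onI continuous_intros)

lemma set_integral_exp_neg_scaleR:
  fixes c :: "'a::{banach, second_countable_topology}"
  shows "(LBINT s:{0..}. exp (- s) *\<^sub>R c) = c"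
proof -
  have "(LBINT s:{0..}. exp (- s) *\<^sub>R c) = (\<integral>s. (indicator {0..} s * exp (- s)) *\<^sub>R c \<partial>lborel)"
    unfolding set_lebesgue_integral_def by (intro Bochner_Integration.integral_cong) auto
  also have "\<dots> = c"
    using set_integrable_exp_neg set_integral_exp_neg
    unfolding set_integrable_def set_lebesgue_integral_def by simp
  finally show ?thesis .
qed

lemma set_integrable_dilation:
  fixes q :: "real \<Rightarrow> 'a::{banach, second_countable_topology}"
  assumes "c > 0" "set_integrable lborel {0..} q"
  shows "set_integrable lborel {0..} (\<lambda>u. q (u / c))"
proof -
  have "integrable lborel (\<lambda>u. indicator {0..} (0 + (1 / c) * u) *\<^sub>R q (0 + (1 / c) * u))"
    using assms by (intro lborel_integrable_real_affine) (simp_all add: set_integrable_def)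
  then show ?thesis
    using assms by (simp add: set_integrable_def indicator_def zero_le_divide_iff)
qed

lemma half_line_Fourier_measurable [measurable]:
  assumes [measurable]: "q \<in> borel_measurable borel"
  shows "half_line_Fourier q \<in> borel_measurable borel"
  unfolding half_line_Fourier_def set_lebesgue_integral_def by measurable

lemma set_integrable_half_line_Fourier_integrand:
  assumes [measurable]: "q \<in> borel_measurable borel" and "set_integrable lborel {0..} q"
  shows "set_integrable lborel {0..} (\<lambda>x. cis (x * t) * of_real (q x))"
  by (rule set_integrable_bound[OF assms(2)])
     (auto simp: set_borel_measurable_def norm_mult)

lemma norm_half_line_Fourier_le:
  assumes [measurable]: "q \<in> borel_measurable borel" and "set_integrable lborel {0..} q"
  shows "norm (half_line_Fourier q t) \<le> (LBINT x:{0..}. \<bar>q x\<bar>)"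
  using set_integral_norm_bound[OF set_integrable_half_line_Fourier_integrand[OF assms]]
  by (simp add: half_line_Fourier_def norm_mult)

lemma half_line_Fourier_dilation:
  assumes "c > 0"
  shows "half_line_Fourier q (c * s) = half_line_Fourier (\<lambda>u. q (u / c)) s / of_real c"
proof -
  have "half_line_Fourier q (c * s)
      = \<bar>1 / c\<bar> *\<^sub>R (\<integral>u. indicator {0..} (0 + (1 / c) * u) *\<^sub>R
            (cis ((0 + (1 / c) * u) * (c * s)) * of_real (q (0 + (1 / c) * u))) \<partial>lborel)"
    unfolding half_line_Fourier_def set_lebesgue_integral_def
    by (rule lborel_integral_real_affine) (use assms in simp)
  also have "(\<integral>u. indicator {0..} (0 + (1 / c) * u) *\<^sub>R
            (cis ((0 + (1 / c) * u) * (c * s)) * of_real (q (0 + (1 / c) * u))) \<partial>lborel)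
      = half_line_Fourier (\<lambda>u. q (u / c)) s"
    unfolding half_line_Fourier_def set_lebesgue_integral_def using assms
    by (intro Bochner_Integration.integral_cong) (auto simp: indicator_def zero_le_divide_iff)
  finally show ?thesis
    using assms by (simp add: scaleR_conv_of_real divide_inverse mult.commute)
qed

lemma exp_mean_half_line_Fourier:
  fixes q :: "real \<Rightarrow> real"
  assumes [measurable]: "q \<in> borel_measurable borel" and int: "set_integrable lborel {0..} q"
  shows "(LBINT s:{0..}. of_real (s * exp (- s)) * half_line_Fourier q s)
       = (LBINT u:{0..}. of_real (q u) * abel_kernel u)"
proof -
  define G where "G s u = indicator {0..} s *\<^sub>R indicator {0..} u *\<^sub>R
      (of_real (q u) * (of_real (s * exp (- s)) * cis (u * s)))" for s u :: real
  have [measurable]: "case_prod G \<in> borel_measurable (lborel \<Otimes>\<^sub>M lborel)"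
    unfolding G_def by measurable
  define N where "N = (LBINT x:{0..}. \<bar>q x\<bar>)"
  have "integrable (lborel \<Otimes>\<^sub>M lborel) (case_prod G)"
  proof (rule lborel_pair.Fubini_integrable)
    have "(\<integral>u. norm (G s u) \<partial>lborel)
        = (\<integral>u. indicator {0..} u * \<bar>q u\<bar> * (indicator {0..} s * (s * exp (- s))) \<partial>lborel)" for s
      by (intro Bochner_Integration.integral_cong) (auto simp: G_def norm_mult abs_mult split: split_indicator)
    also have "\<dots> s = N * (indicator {0..} s * (s * exp (- s)))" for s
      unfolding N_def set_lebesgue_integral_def by simp
    finally have "(\<integral>u. norm (G s u) \<partial>lborel) = indicator {0..} s * (s * exp (- s)) * N" for s
      by simp
    moreover have "integrable lborel (\<lambda>s. indicator {0..} s * (s * exp (- s)) * N)"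
      using set_integrable_mult_exp_neg unfolding set_integrable_def
      by (intro integrable_mult_left) simp
    ultimately show "integrable lborel (\<lambda>s. \<integral>u. norm (case_prod G (s, u)) \<partial>lborel)"
      by simp
    show "AE s in lborel. integrable lborel (\<lambda>u. case_prod G (s, u))"
    proof (rule AE_I2)
      fix s :: real
      show "integrable lborel (\<lambda>u. case_prod G (s, u))"
      proof (rule Bochner_Integration.integrable_bound)
        show "integrable lborel (\<lambda>u. (indicator {0..} s * (s * exp (- s))) *\<^sub>R (indicator {0..} u *\<^sub>R q u))"
          using int unfolding set_integrable_def by (rule integrable_scaleR_right)
      qed (auto simp: G_def norm_mult abs_mult split: split_indicator)
    qed
  qed measurable
  then have "(\<integral>s. (\<integral>u. G s u \<partial>lborel) \<partial>lborel) = (\<integral>u. (\<integral>s. G s u \<partial>lborel) \<partial>lborel)"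
    by (rule lborel_pair.Fubini_integral[symmetric])
  moreover have "(\<integral>u. G s u \<partial>lborel)
      = indicator {0..} s *\<^sub>R (of_real (s * exp (- s)) * half_line_Fourier q s)" for s
  proof -
    have "(\<integral>u. G s u \<partial>lborel) = (\<integral>u. (indicator {0..} s *\<^sub>R of_real (s * exp (- s))) *
        (indicator {0..} u *\<^sub>R (cis (u * s) * of_real (q u))) \<partial>lborel)"
      by (intro Bochner_Integration.integral_cong) (auto simp: G_def mult_ac split: split_indicator)
    also have "\<dots> = (indicator {0..} s *\<^sub>R of_real (s * exp (- s))) * half_line_Fourier q s"
      unfolding half_line_Fourier_def set_lebesgue_integral_def by (rule integral_mult_right_zero)
    finally show ?thesis
      by (simp split: split_indicator)
  qed
  moreover have "(\<integral>s. G s u \<partial>lborel) = indicator {0..} u *\<^sub>R (of_real (q u) * abel_kernel u)" for u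
  proof -
    have "(\<integral>s. G s u \<partial>lborel) = (\<integral>s. (indicator {0..} u *\<^sub>R of_real (q u)) *
        (indicator {0..} s *\<^sub>R (of_real (s * exp (- s)) * cis (u * s))) \<partial>lborel)"
      by (intro Bochner_Integration.integral_cong) (auto simp: G_def mult_ac split: split_indicator)
    also have "\<dots> = (indicator {0..} u *\<^sub>R of_real (q u)) * abel_kernel u"
      unfolding abel_kernel_eq_integral set_lebesgue_integral_def by (rule integral_mult_right_zero)
    finally show ?thesis
      by (simp split: split_indicator)
  qed
  ultimately show ?thesis
    unfolding set_lebesgue_integral_def by simp
qed

lemma tendsto_at_top_imp_bounded_atLeast:
  fixes f :: "real \<Rightarrow> 'a::real_normed_vector"
  assumes lim: "(f \<longlongrightarrow> L) at_top" and local_bound: "\<And>R. \<exists>B. \<forall>x\<in>{a..R}. norm (f x) \<le> B"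
  shows "\<exists>B. \<forall>x\<ge>a. norm (f x) \<le> B"
proof -
  obtain R where R: "\<And>x. x \<ge> R \<Longrightarrow> dist (f x) L < 1"
    using lim unfolding tendsto_iff eventually_at_top_linorder by (meson zero_less_one)
  obtain B where B: "\<And>x. x \<in> {a..R} \<Longrightarrow> norm (f x) \<le> B"
    using local_bound by blast
  have "norm (f x) \<le> max B (norm L + 1)" if "x \<ge> a" for x
  proof (cases "x \<le> R")
    case False
    then have "norm (f x - L) < 1" using R[of x] by (simp add: dist_norm)
    then show ?thesis using norm_triangle_ineq2[of "f x" L] by simp
  qed (use B that in fastforce)
  then show ?thesis by blast
qed

lemma tendsto_exp_mean_dilation:
  fixes P :: "real \<Rightarrow> 'a::{banach, second_countable_topology}"
  assumes lim: "(P \<longlongrightarrow> L) at_top" and [measurable]: "P \<in> borel_measurable borel"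
    and bound: "\<And>t. t \<ge> 0 \<Longrightarrow> norm (P t) \<le> B"
  shows "(\<lambda>n. LBINT s:{0..}. exp (- s) *\<^sub>R P (real (Suc n) * s)) \<longlonglongrightarrow> L"
proof -
  have "(\<lambda>n. LBINT s:{0..}. exp (- s) *\<^sub>R P (real (Suc n) * s)) \<longlonglongrightarrow> (LBINT s:{0..}. exp (- s) *\<^sub>R L)"
    unfolding set_lebesgue_integral_def
  proof (rule integral_dominated_convergence[where w = "\<lambda>s. indicator {0..} s * exp (- s) * B"])
    show "integrable lborel (\<lambda>s. indicator {0..} s * exp (- s) * B)"
      using set_integrable_exp_neg unfolding set_integrable_def by simp
    show "AE s in lborel. (\<lambda>n. indicator {0..} s *\<^sub>R (exp (- s) *\<^sub>R P (real (Suc n) * s)))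
             \<longlonglongrightarrow> indicator {0..} s *\<^sub>R (exp (- s) *\<^sub>R L)"
      using AE_lborel_singleton[of 0]
    proof eventually_elim
      case (elim s)
      show ?case
      proof (cases "s > 0")
        case True
        have "filterlim (\<lambda>n. real (Suc n) * s) at_top sequentially"
          using filterlim_tendsto_pos_mult_at_top[OF tendsto_const True
              filterlim_compose[OF filterlim_real_sequentially filterlim_Suc]]
          by (simp add: mult.commute)
        then show ?thesis
          by (intro tendsto_intros filterlim_compose[OF lim])
      qed (use elim in simp)
    qed
    show "AE s in lborel. norm (indicator {0..} s *\<^sub>R (exp (- s) *\<^sub>R P (real (Suc n) * s)))
            \<le> indicator {0..} s * exp (- s) * B" for n
      by (intro AE_I2) (auto split: split_indicator intro!: mult_left_mono bound)
  qed measurable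
  then show ?thesis
    by (simp only: set_integral_exp_neg_scaleR)
qed

lemma tendsto_abel_kernel_integral_dilation:
  fixes q :: "real \<Rightarrow> real"
  assumes cont: "isCont q 0" and [measurable]: "q \<in> borel_measurable borel"
    and bound: "\<And>x. x \<ge> 0 \<Longrightarrow> \<bar>q x\<bar> \<le> B"
  shows "(\<lambda>n. LBINT u:{0..}. of_real (q (u / real (Suc n))) * abel_kernel u) \<longlonglongrightarrow> of_real (q 0) * \<i>"
proof -
  have "(\<lambda>n. LBINT u:{0..}. of_real (q (u / real (Suc n))) * abel_kernel u)
      \<longlonglongrightarrow> (LBINT u:{0..}. of_real (q 0) * abel_kernel u)"
    unfolding set_lebesgue_integral_def
  proof (rule integral_dominated_convergence[where w = "\<lambda>u. B * norm (indicator {0..} u *\<^sub>R abel_kernel u)"])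
    show "integrable lborel (\<lambda>u. B * norm (indicator {0..} u *\<^sub>R abel_kernel u))"
      using set_integrable_abel_kernel unfolding set_integrable_def
      by (intro integrable_mult_right integrable_norm)
    show "AE u in lborel. (\<lambda>n. indicator {0..} u *\<^sub>R (of_real (q (u / real (Suc n))) * abel_kernel u))
             \<longlonglongrightarrow> indicator {0..} u *\<^sub>R (of_real (q 0) * abel_kernel u)"
    proof (rule AE_I2)
      fix u :: real
      have "(\<lambda>n. u / real (Suc n)) \<longlonglongrightarrow> 0"
        by (intro tendsto_divide_0[OF tendsto_const] filterlim_at_top_imp_at_infinity
            filterlim_compose[OF filterlim_real_sequentially filterlim_Suc])
      then have "(\<lambda>n. q (u / real (Suc n))) \<longlonglongrightarrow> q 0"
        using isCont_tendsto_compose[OF cont] by blast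
      then show "(\<lambda>n. indicator {0..} u *\<^sub>R (of_real (q (u / real (Suc n))) * abel_kernel u))
             \<longlonglongrightarrow> indicator {0..} u *\<^sub>R (of_real (q 0) * abel_kernel u)"
        by (intro tendsto_intros)
    qed
    show "AE u in lborel. norm (indicator {0..} u *\<^sub>R (of_real (q (u / real (Suc n))) * abel_kernel u))
            \<le> B * norm (indicator {0..} u *\<^sub>R abel_kernel u)" for n
      by (intro AE_I2) (auto simp: norm_mult split: split_indicator intro!: mult_right_mono bound)
  qed measurable
  then show ?thesis
    by (simp add: set_integral_abel_kernel)
qed

lemma exp_mean_Fourier_by_parts_dilation:
  fixes q :: "real \<Rightarrow> real"
  assumes [measurable]: "q \<in> borel_measurable borel" and int: "set_integrable lborel {0..} q"
    and "c > 0"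
  shows "(LBINT s:{0..}. exp (- s) *\<^sub>R
            (- of_real (q 0) - \<i> * of_real (c * s) * half_line_Fourier q (c * s)))
       = - of_real (q 0) - \<i> * (LBINT u:{0..}. of_real (q (u / c)) * abel_kernel u)"
proof -
  define q\<^sub>c where "q\<^sub>c u = q (u / c)" for u
  have meas\<^sub>c [measurable]: "q\<^sub>c \<in> borel_measurable borel"
    unfolding q\<^sub>c_def by measurable
  have int\<^sub>c: "set_integrable lborel {0..} q\<^sub>c"
    unfolding q\<^sub>c_def by (rule set_integrable_dilation[OF \<open>c > 0\<close> int])
  have integrand: "exp (- s) *\<^sub>R (- of_real (q 0) - \<i> * of_real (c * s) * half_line_Fourier q (c * s))
      = exp (- s) *\<^sub>R (- of_real (q 0)) - \<i> * (of_real (s * exp (- s)) * half_line_Fourier q\<^sub>c s)" for s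
    using \<open>c > 0\<close> unfolding q\<^sub>c_def
    by (simp add: half_line_Fourier_dilation scaleR_conv_of_real field_simps)
  have "set_integrable lborel {0..} (\<lambda>s. of_real (s * exp (- s)) * half_line_Fourier q\<^sub>c s)"
  proof (rule set_integrable_bound[where f = "\<lambda>s. (LBINT x:{0..}. \<bar>q\<^sub>c x\<bar>) * (s * exp (- s))"])
    show "set_integrable lborel {0..} (\<lambda>s. (LBINT x:{0..}. \<bar>q\<^sub>c x\<bar>) * (s * exp (- s)))"
      using set_integrable_mult_exp_neg by simp
    show "AE s in lborel. s \<in> {0..} \<longrightarrow> norm (of_real (s * exp (- s)) * half_line_Fourier q\<^sub>c s)
        \<le> norm ((LBINT x:{0..}. \<bar>q\<^sub>c x\<bar>) * (s * exp (- s)))"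
    proof (intro AE_I2 impI)
      fix s :: real assume "s \<in> {0..}"
      have "norm (half_line_Fourier q\<^sub>c s) \<le> \<bar>LBINT x:{0..}. \<bar>q\<^sub>c x\<bar>\<bar>"
        using norm_half_line_Fourier_le[OF _ int\<^sub>c, of s] by simp
      then have "s * exp (- s) * norm (half_line_Fourier q\<^sub>c s) \<le> s * exp (- s) * \<bar>LBINT x:{0..}. \<bar>q\<^sub>c x\<bar>\<bar>"
        using \<open>s \<in> {0..}\<close> by (intro mult_left_mono) auto
      then show "norm (of_real (s * exp (- s)) * half_line_Fourier q\<^sub>c s)
          \<le> norm ((LBINT x:{0..}. \<bar>q\<^sub>c x\<bar>) * (s * exp (- s)))"
        using \<open>s \<in> {0..}\<close> by (simp add: norm_mult abs_mult mult_ac)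
    qed
  qed (simp add: set_borel_measurable_def)
  then have Fourier_int: "set_integrable lborel {0..}
      (\<lambda>s. \<i> * (of_real (s * exp (- s)) * half_line_Fourier q\<^sub>c s))"
    by simp
  have const_int: "set_integrable lborel {0..} (\<lambda>s. exp (- s) *\<^sub>R (- of_real (q 0) :: complex))"
    by (intro set_integrable_scaleR_left set_integrable_exp_neg)
  have split: "(LBINT s:{0..}. exp (- s) *\<^sub>R
            (- of_real (q 0) - \<i> * of_real (c * s) * half_line_Fourier q (c * s)))
      = (LBINT s:{0..}. exp (- s) *\<^sub>R (- of_real (q 0)))
        - \<i> * (LBINT s:{0..}. of_real (s * exp (- s)) * half_line_Fourier q\<^sub>c s)"
    unfolding integrand set_integral_diff(2)[OF const_int Fourier_int] by simp
  show ?thesis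
    unfolding split set_integral_exp_neg_scaleR exp_mean_half_line_Fourier[OF meas\<^sub>c int\<^sub>c]
    by (simp add: q\<^sub>c_def)
qed

lemma norm_Phi_le:
  fixes q :: "real \<Rightarrow> real"
  assumes "continuous_on UNIV q" "set_integrable lborel {0..} q" "(q \<longlongrightarrow> 0) at_top"
  shows "norm (Phi q t) \<le> \<bar>q 0\<bar> + \<bar>t\<bar> * (LBINT x:{0..}. \<bar>q x\<bar>)"
proof -
  have [measurable]: "q \<in> borel_measurable borel"
    using assms(1) by (rule borel_measurable_continuous_onI)
  have "norm (Phi q t) \<le> \<bar>q 0\<bar> + \<bar>t\<bar> * norm (half_line_Fourier q t)"
    unfolding Phi_by_parts[OF assms]
    using norm_triangle_ineq4[of "- of_real (q 0)" "\<i> * of_real t * half_line_Fourier q t"]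
    by (simp add: norm_mult)
  also have "\<dots> \<le> \<bar>q 0\<bar> + \<bar>t\<bar> * (LBINT x:{0..}. \<bar>q x\<bar>)"
    using norm_half_line_Fourier_le[OF _ assms(2), of t] by (simp add: mult_left_mono)
  finally show ?thesis .
qed

lemma Phi_limit_at_top_eq_zero:
  fixes q :: "real \<Rightarrow> real"
  assumes cont: "continuous_on UNIV q" and int: "set_integrable lborel {0..} q"
    and lim0: "(q \<longlongrightarrow> 0) at_top" and lim: "(Phi q \<longlongrightarrow> L) at_top"
  shows "L = 0"
proof -
  have [measurable]: "q \<in> borel_measurable borel"
    using cont by (rule borel_measurable_continuous_onI)
  have Phi_eq: "Phi q = (\<lambda>t. - of_real (q 0) - \<i> * of_real t * half_line_Fourier q t)"
    using Phi_by_parts[OF cont int lim0] by (intro ext)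
  have "\<exists>B. \<forall>x\<in>{0..R}. norm (q x) \<le> B" for R
    using compact_imp_bounded[OF compact_continuous_image[OF continuous_on_subset[OF cont] compact_Icc]]
    unfolding bounded_iff by blast
  then obtain B\<^sub>q where B\<^sub>q: "\<And>x. x \<ge> 0 \<Longrightarrow> norm (q x) \<le> B\<^sub>q"
    using tendsto_at_top_imp_bounded_atLeast[OF lim0] by meson
  have "0 \<le> (LBINT x:{0..}. \<bar>q x\<bar>)"
    unfolding set_lebesgue_integral_def by (intro integral_nonneg_AE) simp
  then have "\<bar>t\<bar> * (LBINT x:{0..}. \<bar>q x\<bar>) \<le> \<bar>R\<bar> * (LBINT x:{0..}. \<bar>q x\<bar>)" if "t \<in> {0..R}" for t R
    using that by (intro mult_right_mono) auto
  then have "norm (Phi q t) \<le> \<bar>q 0\<bar> + \<bar>R\<bar> * (LBINT x:{0..}. \<bar>q x\<bar>)" if "t \<in> {0..R}" for t R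
    using norm_Phi_le[OF cont int lim0, of t] that by fastforce
  then have "\<exists>B. \<forall>t\<in>{0..R}. norm (Phi q t) \<le> B" for R
    by blast
  then obtain B where B: "\<And>t. t \<ge> 0 \<Longrightarrow> norm (Phi q t) \<le> B"
    using tendsto_at_top_imp_bounded_atLeast[OF lim] by meson
  have "(\<lambda>n. LBINT s:{0..}. exp (- s) *\<^sub>R Phi q (real (Suc n) * s)) \<longlonglongrightarrow> L"
    by (rule tendsto_exp_mean_dilation[OF lim _ B]) (simp add: Phi_eq)
  moreover have "(\<lambda>n. LBINT s:{0..}. exp (- s) *\<^sub>R Phi q (real (Suc n) * s))
      \<longlonglongrightarrow> - of_real (q 0) - \<i> * (of_real (q 0) * \<i>)"
  proof -
    have "(\<lambda>n. LBINT u:{0..}. of_real (q (u / real (Suc n))) * abel_kernel u)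
        \<longlonglongrightarrow> of_real (q 0) * \<i>"
      using B\<^sub>q cont
      by (intro tendsto_abel_kernel_integral_dilation) (auto simp: continuous_on_eq_continuous_at)
    moreover have "(LBINT s:{0..}. exp (- s) *\<^sub>R Phi q (real (Suc n) * s))
        = - of_real (q 0) - \<i> * (LBINT u:{0..}. of_real (q (u / real (Suc n))) * abel_kernel u)" for n
      unfolding Phi_eq by (intro exp_mean_Fourier_by_parts_dilation int) auto
    ultimately show ?thesis
      by (simp only:) (intro tendsto_intros)
  qed
  ultimately have "L = - of_real (q 0) - \<i> * (of_real (q 0) * \<i>)"
    by (rule LIMSEQ_unique)
  then show ?thesis
    by (simp add: mult.left_commute[of \<i>])
qed

lemma continuous_on_atLeast_extension:
  fixes f :: "real \<Rightarrow> 'a::topological_space"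
  assumes "continuous_on {a..} f"
  obtains g where "continuous_on UNIV g" "\<And>x. x \<ge> a \<Longrightarrow> g x = f x"
proof
  show "continuous_on UNIV (\<lambda>x. f (max a x))"
    by (rule continuous_on_compose2[OF assms]) (auto intro!: continuous_intros)
qed simp

lemma Phi_eq_sin_cos:
  fixes q :: "real \<Rightarrow> real"
  assumes cont: "continuous_on UNIV q" and int: "set_integrable lborel {0<..} q"
    and lim0: "(q \<longlongrightarrow> 0) at_top"
  shows "Phi q t = of_real (t * (LBINT x:{0<..}. q x * sin (x * t)) - q 0)
                   - \<i> * of_real (t * (LBINT x:{0<..}. q x * cos (x * t)))"
proof -
  have [measurable]: "q \<in> borel_measurable borel"
    using cont by (rule borel_measurable_continuous_onI)
  have bounded_factor: "set_integrable lborel {0<..} (\<lambda>x. q x * f x)"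
    if f_le_1: "\<And>x. \<bar>f x\<bar> \<le> 1" and [measurable]: "f \<in> borel_measurable borel" for f
  proof (rule set_integrable_bound[OF int])
    show "AE x in lborel. x \<in> {0<..} \<longrightarrow> norm (q x * f x) \<le> norm (q x)"
      using f_le_1 by (simp add: abs_mult mult_left_le)
  qed (simp add: set_borel_measurable_def)
  have cos_real: "set_integrable lborel {0<..} (\<lambda>x. q x * cos (x * t))"
    by (rule bounded_factor) simp_all
  have sin_real: "set_integrable lborel {0<..} (\<lambda>x. q x * sin (x * t))"
    by (rule bounded_factor) simp_all
  have cos_int: "set_integrable lborel {0<..} (\<lambda>x. of_real (q x * cos (x * t)) :: complex)"
    using integrable_of_real[OF cos_real[unfolded set_integrable_def], where 'a=complex]
    unfolding set_integrable_def by (simp add: scaleR_conv_of_real)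
  have "set_integrable lborel {0<..} (\<lambda>x. of_real (q x * sin (x * t)) :: complex)"
    using integrable_of_real[OF sin_real[unfolded set_integrable_def], where 'a=complex]
    unfolding set_integrable_def by (simp add: scaleR_conv_of_real)
  then have sin_int: "set_integrable lborel {0<..} (\<lambda>x. \<i> * of_real (q x * sin (x * t)))"
    by (rule set_integrable_mult_right[of \<i>, OF _])
  have "(LBINT x:{0<..}. cis (x * t) * of_real (q x))
      = (LBINT x:{0<..}. of_real (q x * cos (x * t)) + \<i> * of_real (q x * sin (x * t)))"
    by (rule set_lebesgue_integral_cong) (auto simp: complex_eq_iff)
  also have "\<dots> = of_real (LBINT x:{0<..}. q x * cos (x * t)) + \<i> * of_real (LBINT x:{0<..}. q x * sin (x * t))"
    by (simp only: set_integral_add(2)[OF cos_int sin_int] set_integral_mult_right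
        set_integral_complex_of_real)
  finally have "(LBINT x:{0<..}. cis (x * t) * of_real (q x))
      = of_real (LBINT x:{0<..}. q x * cos (x * t)) + \<i> * of_real (LBINT x:{0<..}. q x * sin (x * t))" .
  moreover have "half_line_Fourier q t = (LBINT x:{0<..}. cis (x * t) * of_real (q x))"
    unfolding half_line_Fourier_def by (rule set_integral_atLeast_eq_greaterThan) measurable
  moreover have "set_integrable lborel {0..} q"
    using int by (subst set_integrable_atLeast_iff_greaterThan) auto
  ultimately show ?thesis
    using Phi_by_parts[OF cont _ lim0] by (simp add: complex_eq_iff)
qed

lemma tendsto_zero_at_infinity_iff_at_top:
  fixes f :: "real \<Rightarrow> complex"
  assumes "\<And>t. f (- t) = cnj (f t)"
  shows "(f \<longlongrightarrow> 0) at_infinity \<longleftrightarrow> (f \<longlongrightarrow> 0) at_top"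
proof -
  have "(f \<longlongrightarrow> 0) at_bot" if "(f \<longlongrightarrow> 0) at_top"
    unfolding filterlim_at_bot_mirror assms using tendsto_cnj[OF that] by simp
  then show ?thesis
    unfolding at_infinity_eq_at_top_bot by (metis filterlim_sup tendsto_mono sup_ge1)
qed

lemma tendsto_zero_at_infinity_iff_limits:
  fixes P :: "real \<Rightarrow> complex" and S C :: "real \<Rightarrow> real"
  assumes P_eq: "\<And>t. P t = of_real (t * S t - c) - \<i> * of_real (t * C t)"
    and S_odd: "\<And>t. S (- t) = - S t" and C_even: "\<And>t. C (- t) = C t"
    and limit_zero: "\<And>L. (P \<longlongrightarrow> L) at_top \<Longrightarrow> L = 0"
  shows "((P \<longlongrightarrow> 0) at_infinity \<longleftrightarrow>
           (\<exists>L1. ((\<lambda>t. t * S t) \<longlongrightarrow> L1) at_top) \<and> (\<exists>L2. ((\<lambda>t. t * C t) \<longlongrightarrow> L2) at_top))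
       \<and> ((P \<longlongrightarrow> 0) at_infinity \<longrightarrow>
           ((\<lambda>t. t * S t) \<longlongrightarrow> c) at_top \<and> ((\<lambda>t. t * C t) \<longlongrightarrow> 0) at_top)"
proof -
  have "(P \<longlongrightarrow> 0) at_infinity \<longleftrightarrow> (P \<longlongrightarrow> 0) at_top"
    using S_odd C_even by (intro tendsto_zero_at_infinity_iff_at_top) (simp add: P_eq complex_eq_iff)
  also have "\<dots> \<longleftrightarrow> ((\<lambda>t. t * S t) \<longlongrightarrow> c) at_top \<and> ((\<lambda>t. t * C t) \<longlongrightarrow> 0) at_top"
  proof -
    have "Re (P t) = t * S t - c" "Im (P t) = - (t * C t)" for t
      by (simp_all add: P_eq)
    then show ?thesis
      using LIM_zero_iff[of "\<lambda>t. t * S t" c at_top] tendsto_minus_cancel_left[of "\<lambda>t. t * C t" 0 at_top]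
      unfolding tendsto_complex_iff by simp
  qed
  finally have P_iff: "(P \<longlongrightarrow> 0) at_infinity \<longleftrightarrow>
      ((\<lambda>t. t * S t) \<longlongrightarrow> c) at_top \<and> ((\<lambda>t. t * C t) \<longlongrightarrow> 0) at_top" .
  have "L1 = c \<and> L2 = 0"
    if "((\<lambda>t. t * S t) \<longlongrightarrow> L1) at_top" "((\<lambda>t. t * C t) \<longlongrightarrow> L2) at_top" for L1 L2
  proof -
    have "(P \<longlongrightarrow> of_real (L1 - c) - \<i> * of_real L2) at_top"
      unfolding P_eq[abs_def] using that by (intro tendsto_intros)
    then have "of_real (L1 - c) - \<i> * of_real L2 = 0"
      by (rule limit_zero)
    then show ?thesis
      by (simp add: complex_eq_iff)
  qed
  then show ?thesis
    using P_iff by blast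
qed

theorem corollary1:
  fixes \<phi> :: "real \<Rightarrow> real"
  assumes cont: "continuous_on {0..} \<phi>"
    and integrable: "set_integrable lborel {0<..} \<phi>"
    and bv: "bounded_variation_on \<phi> {0..}"
    and lim0: "(\<phi> \<longlongrightarrow> 0) at_top"
  shows "((Phi \<phi> \<longlongrightarrow> 0) at_infinity \<longleftrightarrow>
           (\<exists>L1. ((\<lambda>t. t * (LBINT x:{0<..}. \<phi> x * sin (x * t))) \<longlongrightarrow> L1) at_top) \<and>
           (\<exists>L2. ((\<lambda>t. t * (LBINT x:{0<..}. \<phi> x * cos (x * t))) \<longlongrightarrow> L2) at_top))
       \<and> ((Phi \<phi> \<longlongrightarrow> 0) at_infinity \<longrightarrow>
           ((\<lambda>t. t * (LBINT x:{0<..}. \<phi> x * sin (x * t))) \<longlongrightarrow> \<phi> 0) at_top \<and>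
           ((\<lambda>t. t * (LBINT x:{0<..}. \<phi> x * cos (x * t))) \<longlongrightarrow> 0) at_top)"
proof -
  obtain q where q: "continuous_on UNIV q" and q_eq: "\<And>x. x \<ge> 0 \<Longrightarrow> q x = \<phi> x"
    using continuous_on_atLeast_extension[OF cont] by blast
  have [measurable]: "q \<in> borel_measurable borel"
    using q by (rule borel_measurable_continuous_onI)
  have q_int: "set_integrable lborel {0<..} q"
    using integrable by (subst set_integrable_cong[OF refl refl]) (auto simp: q_eq)
  have q_lim: "(q \<longlongrightarrow> 0) at_top"
    using lim0 eventually_ge_at_top[of 0]
    by (rule Lim_transform_eventually[OF _ eventually_mono]) (simp add: q_eq)
  have Phi_q: "Phi \<phi> = Phi q"
    by (rule Phi_cong) (simp add: q_eq)
  have "(LBINT x:{0<..}. q x * f (x * t)) = (LBINT x:{0<..}. \<phi> x * f (x * t))" for f t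
    by (auto intro!: set_lebesgue_integral_cong simp: q_eq)
  then have "Phi \<phi> t = of_real (t * (LBINT x:{0<..}. \<phi> x * sin (x * t)) - \<phi> 0)
                        - \<i> * of_real (t * (LBINT x:{0<..}. \<phi> x * cos (x * t)))" for t
    using Phi_eq_sin_cos[OF q q_int q_lim, of t] q_eq[of 0] by (simp add: Phi_q)
  then show ?thesis
  proof (rule tendsto_zero_at_infinity_iff_limits)
    show "(LBINT x:{0<..}. \<phi> x * sin (x * - t)) = - (LBINT x:{0<..}. \<phi> x * sin (x * t))"
      and "(LBINT x:{0<..}. \<phi> x * cos (x * - t)) = (LBINT x:{0<..}. \<phi> x * cos (x * t))" for t
      unfolding set_lebesgue_integral_def by simp_all
    show "L = 0" if "(Phi \<phi> \<longlongrightarrow> L) at_top" for L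
      using that q_int unfolding Phi_q
      by (intro Phi_limit_at_top_eq_zero[OF q _ q_lim]) (auto simp: set_integrable_atLeast_iff_greaterThan)
  qed
qed

end
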